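(* Under assumptions (i) and (ii) below, $\mathcal T\subset\mathcal L(H_1,H_2)$, where $\mathcal T=\{H\in\mathcal O:(H\psi_k,\psi_k)=0\text{ for all }k=1,\dots,N\}$ (a real space of dimension $N(N-1)$). (i) $(H_1\psi_k,\psi_j)\ne0$ for all $k\ne j$; (ii) $\lambda_k-\lambda_l\ne\lambda_{k'}-\lambda_{l'}$ for all ordered pairs $(k,l)\ne(k',l')$, where $\lambda_k$ are the eigenvalues of $H_2$ and $\psi_k$ corresponding orthonormal eigenvectors.
   Context: $\mathcal H=\mathbb C^N$, $N>1$. $\mathcal O$ is the real vector space of Hermitian operators on $\mathcal H$, with bracket $\{A,B\}=i(AB-BA)$. For $H_1,H_2\in\mathcal O$, $\mathcal L(H_1,H_2)$ is the real linear span of $H_1,H_2$ and all iterated brackets $\{H_1,H_2\},\{H_1,\{H_1,H_2\}\},\{H_2,\{H_1,H_2\}\},\dots$. *)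

theory Defs
  imports "HOL-Analysis.Analysis"
begin

text \<open>Operators on H = C^N are N x N complex matrices indexed by a finite type 'n
  with CARD('n) = N.\<close>

type_synonym 'n cmat = "complex ^ 'n ^ 'n"

definition herm :: "'n::finite cmat \<Rightarrow> bool" where
  "herm A \<longleftrightarrow> (\<forall>i j. A $ i $ j = cnj (A $ j $ i))"

definition cinner :: "complex ^ 'n::finite \<Rightarrow> complex ^ 'n \<Rightarrow> complex" where
  "cinner x y = (\<Sum>i\<in>UNIV. x $ i * cnj (y $ i))"

definition qbr :: "'n::finite cmat \<Rightarrow> 'n cmat \<Rightarrow> 'n cmat" where
  "qbr A B = (\<chi> i j. \<i> * ((A ** B) $ i $ j - (B ** A) $ i $ j))"

inductive_set iter_brackets :: "'n::finite cmat \<Rightarrow> 'n cmat \<Rightarrow> 'n cmat set"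
  for H1 H2 where
  gen1: "H1 \<in> iter_brackets H1 H2"
| gen2: "H2 \<in> iter_brackets H1 H2"
| br: "A \<in> iter_brackets H1 H2 \<Longrightarrow> B \<in> iter_brackets H1 H2 \<Longrightarrow>
        qbr A B \<in> iter_brackets H1 H2"

text \<open>L(H1,H2): real linear span (span = real_vector.span).\<close>
definition Lie_gen :: "'n::finite cmat \<Rightarrow> 'n cmat \<Rightarrow> 'n cmat set" where
  "Lie_gen H1 H2 = span (iter_brackets H1 H2)"

definition Tset :: "('n::finite \<Rightarrow> complex ^ 'n) \<Rightarrow> 'n cmat set" where
  "Tset \<psi> = {H. herm H \<and> (\<forall>k. cinner (H *v \<psi> k) (\<psi> k) = 0)}"

end

theory Submission
  imports Defs
begin

text \<open>In the eigenbasis of \<open>H\<^sub>2\<close> the bracket \<open>{H\<^sub>2, X}\<close> multiplies the \<open>(k, j)\<close> matrix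
  element of \<open>X\<close> by \<open>i(\<lambda>\<^sub>k - \<lambda>\<^sub>j)\<close>, and \<open>L(H\<^sub>1, H\<^sub>2)\<close> is a real subspace invariant under
  this bracket. Applying to \<open>H\<^sub>1\<close> the real polynomial \<open>\<Prod>\<^sub>w (ad\<^sup>2 + w)\<close>, with \<open>w\<close> ranging over
  the squared gaps different from \<open>(\<lambda>\<^sub>k - \<lambda>\<^sub>j)\<^sup>2\<close>, kills every matrix element except those
  at \<open>(k, j)\<close> and \<open>(j, k)\<close>; by (ii) these are the only positions with that squared gap,
  and by (i) they survive. A real combination of the result and its bracket with \<open>H\<^sub>2\<close>
  yields \<open>z E\<^sub>k\<^sub>j + z\<^sup>* E\<^sub>j\<^sub>k\<close> for every complex \<open>z\<close>, and these matrices span \<open>T\<close>.\<close>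

definition matrix_elem :: "('n::finite \<Rightarrow> complex ^ 'n) \<Rightarrow> 'n cmat \<Rightarrow> 'n \<Rightarrow> 'n \<Rightarrow> complex" where
  "matrix_elem \<psi> X k j = cinner (X *v \<psi> j) (\<psi> k)"

lemma matrix_elem_expand:
  "matrix_elem \<psi> X k j = (\<Sum>a\<in>UNIV. \<Sum>b\<in>UNIV. cnj (\<psi> k $ a) * X $ a $ b * \<psi> j $ b)"
  unfolding matrix_elem_def cinner_def matrix_vector_mult_def
  by (simp add: sum_distrib_left sum_distrib_right mult.commute mult.left_commute)

lemma linear_matrix_elem: "linear (\<lambda>X. matrix_elem \<psi> X k j)"
  by (rule linearI)
    (simp_all add: matrix_elem_expand sum.distrib sum_distrib_left
      scaleR_conv_of_real[where 'a = complex] algebra_simps)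

lemmas matrix_elem_add = linear_add[OF linear_matrix_elem]
  and matrix_elem_scaleR = linear_scale[OF linear_matrix_elem]
  and matrix_elem_sum = linear_sum[OF linear_matrix_elem]

lemma cinner_herm_adjoint:
  assumes "herm A"
  shows "cinner (A *v x) y = cinner x (A *v y)"
proof -
  have A: "cnj (A $ a $ b) = A $ b $ a" for a b
    using assms unfolding herm_def by (metis complex_cnj_cnj)
  have "cinner (A *v x) y = (\<Sum>i\<in>UNIV. \<Sum>j\<in>UNIV. A $ i $ j * x $ j * cnj (y $ i))"
    unfolding cinner_def matrix_vector_mult_def by (simp add: sum_distrib_right)
  also have "\<dots> = (\<Sum>j\<in>UNIV. \<Sum>i\<in>UNIV. A $ i $ j * x $ j * cnj (y $ i))"
    by (rule sum.swap)
  also have "\<dots> = cinner x (A *v y)"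
    unfolding cinner_def matrix_vector_mult_def by (simp add: sum_distrib_left A mult_ac)
  finally show ?thesis .
qed

lemma herm_matrix_elem_swap:
  assumes "herm A"
  shows "matrix_elem \<psi> A j k = cnj (matrix_elem \<psi> A k j)"
proof -
  have "cnj (cinner x y) = cinner y x" for x y :: "complex ^ 'a"
    unfolding cinner_def by (simp add: mult.commute)
  then show ?thesis
    unfolding matrix_elem_def by (simp add: cinner_herm_adjoint[OF assms])
qed

lemma matrix_elem_conv_matrix_mult:
  "matrix_elem \<psi> X k j = ((\<chi> k a. cnj (\<psi> k $ a)) ** X ** (\<chi> a k. \<psi> k $ a)) $ k $ j"
  unfolding matrix_elem_expand matrix_matrix_mult_def
  by (simp add: sum_distrib_right) (subst sum.swap, simp)

lemma matrix_elem_eqI: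
  fixes \<psi> :: "'n::finite \<Rightarrow> complex ^ 'n"
  assumes orth: "\<forall>k j. cinner (\<psi> k) (\<psi> j) = (if k = j then 1 else 0)"
    and eq: "\<And>k j. matrix_elem \<psi> X k j = matrix_elem \<psi> Y k j"
  shows "X = Y"
proof -
  define V :: "'n cmat" where "V = (\<chi> k a. cnj (\<psi> k $ a))"
  define U :: "'n cmat" where "U = (\<chi> a k. \<psi> k $ a)"
  have "V ** U = mat 1"
    using orth unfolding V_def U_def matrix_matrix_mult_def cinner_def
    by (simp add: vec_eq_iff mat_def mult.commute)
  then have UV: "U ** V = mat 1"
    using matrix_left_right_inverse by blast
  have "V ** X ** U = V ** Y ** U"
    using eq unfolding matrix_elem_conv_matrix_mult V_def U_def by (simp add: vec_eq_iff)
  then have "U ** (V ** X ** U) ** V = U ** (V ** Y ** U) ** V"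
    by simp
  then show ?thesis
    by (metis UV matrix_mul_assoc matrix_mul_lid matrix_mul_rid)
qed

text \<open>The matrix elements of \<open>z E\<^sub>k\<^sub>j + z\<^sup>* E\<^sub>j\<^sub>k\<close>; \<open>of_bool\<close> instead of \<open>if\<close> keeps the
  simplifier from looping on the symmetric conditions.\<close>
definition herm_unit :: "'n \<Rightarrow> 'n \<Rightarrow> complex \<Rightarrow> 'n \<Rightarrow> 'n \<Rightarrow> complex" where
  "herm_unit k j z a b = of_bool (a = k \<and> b = j) * z + of_bool (a = j \<and> b = k) * cnj z"

lemma herm_unit_scaleR_add:
  "r *\<^sub>R herm_unit k j u a b + s *\<^sub>R herm_unit k j v a b = herm_unit k j (r *\<^sub>R u + s *\<^sub>R v) a b"
  by (simp add: herm_unit_def algebra_simps)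

lemma herm_unit_eq_0:
  assumes "(a, b) \<noteq> (k, j)" and "(a, b) \<noteq> (j, k)"
  shows "herm_unit k j z a b = 0"
  using assms unfolding herm_unit_def
  by (simp only: prod.inject of_bool_eq simp_thms mult_zero_left add_0)

lemma sum_herm_units:
  fixes h :: "'n::finite \<Rightarrow> 'n \<Rightarrow> complex"
  assumes sym: "\<And>a b. h b a = cnj (h a b)" and diag: "\<And>a. h a a = 0"
  shows "(\<Sum>(k, j)\<in>{(k, j). k \<noteq> j}. herm_unit k j (h k j) a b) = 2 * h a b"
proof (cases "a = b")
  case True
  then show ?thesis
    by (simp add: diag, intro sum.neutral) (auto simp: herm_unit_def)
next
  case False
  have "{(k, j). k \<noteq> j} \<inter> {p. a = fst p \<and> b = snd p} = {(a, b)}"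
    and "{(k, j). k \<noteq> j} \<inter> {p. a = snd p \<and> b = fst p} = {(b, a)}"
    using False by auto
  then have "(\<Sum>(k, j)\<in>{(k, j). k \<noteq> j}. herm_unit k j (h k j) a b) = h a b + cnj (h b a)"
    by (simp add: herm_unit_def case_prod_beta sum.distrib)
  also have "\<dots> = 2 * h a b"
    by (simp add: sym[of a b])
  finally show ?thesis .
qed

lemma Tset_subset_subspace:
  fixes \<psi> :: "'n::finite \<Rightarrow> complex ^ 'n"
  assumes orth: "\<forall>k j. cinner (\<psi> k) (\<psi> j) = (if k = j then 1 else 0)"
    and S: "subspace S"
    and units: "\<And>k j z. k \<noteq> j \<Longrightarrow> \<exists>G\<in>S. \<forall>a b. matrix_elem \<psi> G a b = herm_unit k j z a b"
  shows "Tset \<psi> \<subseteq> S"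
proof
  fix H assume "H \<in> Tset \<psi>"
  then have herm: "herm H" and diag: "\<And>k. matrix_elem \<psi> H k k = 0"
    unfolding Tset_def matrix_elem_def by auto
  define h where "h = matrix_elem \<psi> H"
  define G where
    "G k j = (SOME G. G \<in> S \<and> (\<forall>a b. matrix_elem \<psi> G a b = herm_unit k j (h k j) a b))" for k j
  have G: "G k j \<in> S" and elems_G: "matrix_elem \<psi> (G k j) a b = herm_unit k j (h k j) a b"
    if "k \<noteq> j" for k j a b
    using someI_ex[OF units[OF that, of "h k j", unfolded Bex_def]] unfolding G_def by auto
  \<comment> \<open>every unordered pair \<open>{k, j}\<close> is counted twice\<close>
  let ?G = "(1 / 2) *\<^sub>R (\<Sum>(k, j)\<in>{(k, j). k \<noteq> j}. G k j)"
  have "?G \<in> S"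
    using G by (auto intro!: subspace_scale[OF S] subspace_sum[OF S])
  moreover have "matrix_elem \<psi> ?G a b = h a b" for a b
  proof -
    have "matrix_elem \<psi> (\<Sum>(k, j)\<in>{(k, j). k \<noteq> j}. G k j) a b
        = (\<Sum>(k, j)\<in>{(k, j). k \<noteq> j}. herm_unit k j (h k j) a b)"
      unfolding matrix_elem_sum by (intro sum.cong) (auto simp: elems_G)
    also have "\<dots> = 2 * h a b"
      using herm_matrix_elem_swap[OF herm] diag unfolding h_def by (intro sum_herm_units)
    finally show ?thesis
      by (simp add: matrix_elem_scaleR scaleR_conv_of_real[where 'a = complex])
  qed
  ultimately show "H \<in> S"
    using matrix_elem_eqI[OF orth, of ?G H] unfolding h_def by auto
qed

lemma linear_qbr: "linear (qbr A)"
  by (rule linearI)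
    (simp_all add: qbr_def matrix_matrix_mult_def vec_eq_iff sum.distrib sum_distrib_left
      scaleR_conv_of_real[where 'a = complex] algebra_simps)

lemma subspace_Lie_gen: "subspace (Lie_gen H1 H2)"
  unfolding Lie_gen_def by (rule subspace_span)

lemma generator_in_Lie_gen: "H1 \<in> Lie_gen H1 H2"
  unfolding Lie_gen_def by (intro span_base iter_brackets.gen1)

lemma qbr_generator_in_Lie_gen:
  assumes "X \<in> Lie_gen H1 H2"
  shows "qbr H2 X \<in> Lie_gen H1 H2"
proof -
  have "qbr H2 X \<in> qbr H2 ` span (iter_brackets H1 H2)"
    using assms unfolding Lie_gen_def by blast
  also have "\<dots> = span (qbr H2 ` iter_brackets H1 H2)"
    by (rule span_linear_image[OF linear_qbr, symmetric])
  also have "\<dots> \<subseteq> span (iter_brackets H1 H2)"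
    by (intro span_mono) (auto intro: iter_brackets.br iter_brackets.gen2)
  finally show ?thesis
    unfolding Lie_gen_def .
qed

lemma cinner_diff_left: "cinner (x - y) z = cinner x z - cinner y z"
  unfolding cinner_def by (simp add: algebra_simps sum_subtractf)

lemma cinner_scale_left: "cinner (c *s x) y = c * cinner x y"
  unfolding cinner_def by (simp add: algebra_simps sum_distrib_left)

lemma cinner_scale_right: "cinner x (c *s y) = cnj c * cinner x y"
  unfolding cinner_def by (simp add: algebra_simps sum_distrib_left)

lemma qbr_mult_vec: "qbr A B *v x = \<i> *s ((A ** B) *v x - (B ** A) *v x)"
  unfolding qbr_def matrix_vector_mult_def
  by (simp add: vec_eq_iff algebra_simps sum_distrib_left sum_subtractf)

definition distinct_gaps :: "('n \<Rightarrow> real) \<Rightarrow> bool" where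
  "distinct_gaps lam \<longleftrightarrow>
     (\<forall>k l k' l'. k \<noteq> l \<and> k' \<noteq> l' \<and> (k, l) \<noteq> (k', l') \<longrightarrow> lam k - lam l \<noteq> lam k' - lam l')"

lemma distinct_gaps_imp_distinct:
  assumes "distinct_gaps lam" and "k \<noteq> j"
  shows "lam k \<noteq> lam j"
  using assms unfolding distinct_gaps_def by (metis prod.inject)

lemma distinct_gaps_square_eq:
  assumes gaps: "distinct_gaps lam" and "k \<noteq> j"
    and eq: "(lam a - lam b)\<^sup>2 = (lam k - lam j)\<^sup>2"
  shows "(a, b) = (k, j) \<or> (a, b) = (j, k)"
proof -
  have "a \<noteq> b"
    using eq distinct_gaps_imp_distinct[OF assms(1,2)] by auto
  moreover have "lam a - lam b = lam k - lam j \<or> lam a - lam b = lam j - lam k"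
    using eq by (auto simp: power2_eq_iff)
  ultimately show ?thesis
    using gaps \<open>k \<noteq> j\<close> unfolding distinct_gaps_def by metis
qed

locale eigenbasis =
  fixes H :: "'n::finite cmat" and \<psi> :: "'n \<Rightarrow> complex ^ 'n" and lam :: "'n \<Rightarrow> real"
  assumes herm: "herm H"
    and eigen: "\<And>k. H *v \<psi> k = complex_of_real (lam k) *s \<psi> k"
begin

lemma matrix_elem_qbr:
  "matrix_elem \<psi> (qbr H X) k j = \<i> * of_real (lam k - lam j) * matrix_elem \<psi> X k j"
proof -
  have "cinner ((H ** X) *v \<psi> j) (\<psi> k) = of_real (lam k) * matrix_elem \<psi> X k j"
    by (simp add: matrix_vector_mul_assoc[symmetric] cinner_herm_adjoint[OF herm] eigen
        cinner_scale_right matrix_elem_def)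
  moreover have "cinner ((X ** H) *v \<psi> j) (\<psi> k) = of_real (lam j) * matrix_elem \<psi> X k j"
    by (simp add: matrix_vector_mul_assoc[symmetric] eigen vector_scalar_commute
        cinner_scale_left matrix_elem_def)
  ultimately show ?thesis
    by (simp add: matrix_elem_def qbr_mult_vec cinner_scale_left cinner_diff_left algebra_simps)
qed

lemma spectral_filter:
  assumes S: "subspace S" and inv: "\<And>Y. Y \<in> S \<Longrightarrow> qbr H Y \<in> S"
    and "X \<in> S" and "finite W"
  shows "\<exists>Y\<in>S. \<forall>a b. matrix_elem \<psi> Y a b =
           of_real (\<Prod>w\<in>W. w - (lam a - lam b)\<^sup>2) * matrix_elem \<psi> X a b"
  using \<open>finite W\<close>
proof (induction W rule: finite_induct)
  case empty
  then show ?case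
    using \<open>X \<in> S\<close> by auto
next
  case (insert w W)
  then obtain Y where "Y \<in> S"
    and elems_Y: "\<And>a b. matrix_elem \<psi> Y a b =
           of_real (\<Prod>w\<in>W. w - (lam a - lam b)\<^sup>2) * matrix_elem \<psi> X a b"
    by blast
  let ?Y = "qbr H (qbr H Y) + w *\<^sub>R Y"
  have "?Y \<in> S"
    using \<open>Y \<in> S\<close> by (intro subspace_add[OF S] subspace_scale[OF S] inv)
  moreover have "matrix_elem \<psi> ?Y a b =
      of_real (\<Prod>w\<in>insert w W. w - (lam a - lam b)\<^sup>2) * matrix_elem \<psi> X a b" for a b
  proof -
    have "matrix_elem \<psi> ?Y a b = of_real (w - (lam a - lam b)\<^sup>2) * matrix_elem \<psi> Y a b"
      by (simp add: matrix_elem_add matrix_elem_scaleR matrix_elem_qbr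
          scaleR_conv_of_real[where 'a = complex] power2_eq_square algebra_simps)
    then show ?thesis
      using insert.hyps by (simp add: elems_Y)
  qed
  ultimately show ?case
    by blast
qed

lemma herm_unit_any_coefficient:
  assumes S: "subspace S" and inv: "\<And>Y. Y \<in> S \<Longrightarrow> qbr H Y \<in> S"
    and "X \<in> S" and elems_X: "\<And>a b. matrix_elem \<psi> X a b = herm_unit k j u a b"
    and "u \<noteq> 0" and "lam k \<noteq> lam j"
  shows "\<exists>G\<in>S. \<forall>a b. matrix_elem \<psi> G a b = herm_unit k j z a b"
proof -
  define v where "v = \<i> * of_real (lam k - lam j) * u"
  have elems_qbr: "matrix_elem \<psi> (qbr H X) a b = herm_unit k j v a b" for a b
    by (auto simp: matrix_elem_qbr elems_X herm_unit_def v_def algebra_simps)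
  define q where "q = z / u"
  define \<alpha> where "\<alpha> = Re q"
  define \<beta> where "\<beta> = Im q / (lam k - lam j)"
  have "\<alpha> *\<^sub>R u + \<beta> *\<^sub>R v = (of_real (Re q) + \<i> * of_real (Im q)) * u"
    using \<open>lam k \<noteq> lam j\<close>
    by (simp add: \<alpha>_def \<beta>_def v_def scaleR_conv_of_real field_simps)
  also have "\<dots> = z"
    using \<open>u \<noteq> 0\<close> by (simp add: complex_eq[symmetric] q_def)
  finally have z: "\<alpha> *\<^sub>R u + \<beta> *\<^sub>R v = z" .
  let ?G = "\<alpha> *\<^sub>R X + \<beta> *\<^sub>R qbr H X"
  have "?G \<in> S"
    using \<open>X \<in> S\<close> by (intro subspace_add[OF S] subspace_scale[OF S] inv)
  moreover have "matrix_elem \<psi> ?G a b = herm_unit k j z a b" for a b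
    by (simp add: matrix_elem_add matrix_elem_scaleR elems_X elems_qbr herm_unit_scaleR_add z)
  ultimately show ?thesis
    by blast
qed

lemma herm_unit_in_invariant_subspace:
  assumes S: "subspace S" and inv: "\<And>Y. Y \<in> S \<Longrightarrow> qbr H Y \<in> S"
    and "A \<in> S" and "herm A" and coupling: "matrix_elem \<psi> A k j \<noteq> 0"
    and gaps: "distinct_gaps lam" and "k \<noteq> j"
  shows "\<exists>G\<in>S. \<forall>a b. matrix_elem \<psi> G a b = herm_unit k j z a b"
proof -
  define W where "W = (\<lambda>(a, b). (lam a - lam b)\<^sup>2) ` UNIV - {(lam k - lam j)\<^sup>2}"
  obtain Y where "Y \<in> S"
    and elems_Y: "\<And>a b. matrix_elem \<psi> Y a b =
           of_real (\<Prod>w\<in>W. w - (lam a - lam b)\<^sup>2) * matrix_elem \<psi> A a b"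
    using spectral_filter[OF S inv \<open>A \<in> S\<close>, of W] unfolding W_def by auto
  define r where "r = (\<Prod>w\<in>W. w - (lam k - lam j)\<^sup>2)"
  have "r \<noteq> 0"
    unfolding r_def W_def by (auto simp: prod_zero_iff)
  have elems_Y_unit: "matrix_elem \<psi> Y a b = herm_unit k j (of_real r * matrix_elem \<psi> A k j) a b"
    for a b
  proof -
    consider "a = k" "b = j" | "a = j" "b = k" | "(a, b) \<noteq> (k, j)" "(a, b) \<noteq> (j, k)"
      by auto
    then show ?thesis
    proof cases
      case 1
      then show ?thesis
        using \<open>k \<noteq> j\<close> by (simp add: elems_Y herm_unit_def r_def)
    next
      case 2
      have "(\<Prod>w\<in>W. w - (lam j - lam k)\<^sup>2) = r"
        unfolding r_def by (simp add: power2_commute)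
      then show ?thesis
        using 2 \<open>k \<noteq> j\<close> herm_matrix_elem_swap[OF \<open>herm A\<close>, of \<psi> j k]
        by (simp add: elems_Y herm_unit_def)
    next
      case 3
      then have "(lam a - lam b)\<^sup>2 \<noteq> (lam k - lam j)\<^sup>2"
        using distinct_gaps_square_eq[OF gaps \<open>k \<noteq> j\<close>] by blast
      then have "(lam a - lam b)\<^sup>2 \<in> W"
        unfolding W_def by (auto intro: image_eqI[where x = "(a, b)"])
      then have "(\<Prod>w\<in>W. w - (lam a - lam b)\<^sup>2) = 0"
        unfolding W_def by (intro prod_zero) auto
      then show ?thesis
        using 3 by (simp add: elems_Y herm_unit_eq_0)
    qed
  qed
  moreover have "of_real r * matrix_elem \<psi> A k j \<noteq> 0"
    using \<open>r \<noteq> 0\<close> coupling by simp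
  ultimately show ?thesis
    using herm_unit_any_coefficient[OF S inv \<open>Y \<in> S\<close>] distinct_gaps_imp_distinct[OF gaps \<open>k \<noteq> j\<close>]
    by blast
qed

end

theorem mainTheorem7:
  fixes H1 H2 :: "complex ^ 'n::finite ^ 'n"
    and \<psi> :: "'n \<Rightarrow> complex ^ 'n"
    and lam :: "'n \<Rightarrow> real"
  assumes N: "CARD('n) > 1"
    and h1: "herm H1" and h2: "herm H2"
    and orth: "\<forall>k j. cinner (\<psi> k) (\<psi> j) = (if k = j then 1 else 0)"
    and eig: "\<forall>k. H2 *v \<psi> k = complex_of_real (lam k) *s \<psi> k"
    and i: "\<forall>k j. k \<noteq> j \<longrightarrow> cinner (H1 *v \<psi> k) (\<psi> j) \<noteq> 0"
    and ii: "\<forall>k l k' l'. k \<noteq> l \<and> k' \<noteq> l' \<and> (k, l) \<noteq> (k', l') \<longrightarrow>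
               lam k - lam l \<noteq> lam k' - lam l'"
  shows "Tset \<psi> \<subseteq> Lie_gen H1 H2"
proof (rule Tset_subset_subspace[OF orth subspace_Lie_gen])
  interpret eigenbasis H2 \<psi> lam
    using h2 eig by unfold_locales auto
  have gaps: "distinct_gaps lam"
    using ii unfolding distinct_gaps_def .
  fix k j :: 'n and z
  assume "k \<noteq> j"
  moreover have "matrix_elem \<psi> H1 k j \<noteq> 0"
    using i \<open>k \<noteq> j\<close> unfolding matrix_elem_def by auto
  ultimately show "\<exists>G\<in>Lie_gen H1 H2. \<forall>a b. matrix_elem \<psi> G a b = herm_unit k j z a b"
    by (intro herm_unit_in_invariant_subspace[OF subspace_Lie_gen qbr_generator_in_Lie_gen
        generator_in_Lie_gen h1 _ gaps])
qed

end
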